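(* Every $6$-dimensional real $2$-step nilpotent Lie algebra $\mathfrak{n}$ admits a complex structure. Moreover, $\mathfrak{n}$ admits a $3$-step complex structure if and only if $\mathfrak{n}$ is isomorphic to $\mathfrak{f}_3$, and every complex structure on $\mathfrak{f}_3$ is $3$-step.
   Context: $\mathfrak{f}_3$ is the free $2$-step nilpotent Lie algebra of rank $3$: $\mathfrak{f}_3=V\oplus\Lambda^2(V)$ with $\dim V=3$, bracket $[v,w]=v\wedge w$ for $v,w\in V$, and $\Lambda^2(V)$ central (equivalently, it has a basis $e_1,\dots,e_6$ with $[e_1,e_2]=e_4$, $[e_1,e_3]=e_5$, $[e_2,e_3]=e_6$). A complex structure on a real Lie algebra $\mathfrak{g}$ is a linear map $J:\mathfrak{g}\to\mathfrak{g}$ with $J^2=-I$ and $N_J(x,y):=[x,y]+J([Jx,y]+[x,Jy])-[Jx,Jy]=0$ for all $x,y\in\mathfrak{g}$. Given such $J$, define inductively $\mathfrak{a}_0(J)=0$ and $\mathfrak{a}_\ell(J)=\{x\in\mathfrak{g}: [x,\mathfrak{g}]\subset\mathfrak{a}_{\ell-1}(J)\text{ and }[Jx,\mathfrak{g}]\subset\mathfrak{a}_{\ell-1}(J)\}$ for $\ell\ge1$. $J$ is called nilpotent if $\mathfrak{a}_t(J)=\mathfrak{g}$ for some positive integer $t$, and $t$-step if $t$ is the smallest such integer. *)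

theory Defs
  imports "HOL-Analysis.Analysis"
begin

definition lie_algebra :: "('v::real_vector \<Rightarrow> 'v \<Rightarrow> 'v) \<Rightarrow> bool" where
  "lie_algebra br \<longleftrightarrow> bilinear br \<and> (\<forall>x. br x x = 0) \<and>
     (\<forall>x y z. br x (br y z) + br y (br z x) + br z (br x y) = 0)"

definition two_step_nilpotent :: "('v::real_vector \<Rightarrow> 'v \<Rightarrow> 'v) \<Rightarrow> bool" where
  "two_step_nilpotent br \<longleftrightarrow> (\<forall>x y z. br (br x y) z = 0) \<and> (\<exists>x y. br x y \<noteq> 0)"

text \<open>Complex structure: J^2 = -I and vanishing Nijenhuis tensor.\<close>
definition complex_structure :: "('v::real_vector \<Rightarrow> 'v \<Rightarrow> 'v) \<Rightarrow> ('v \<Rightarrow> 'v) \<Rightarrow> bool" where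
  "complex_structure br J \<longleftrightarrow> linear J \<and> (\<forall>x. J (J x) = - x) \<and>
     (\<forall>x y. br x y + J (br (J x) y + br x (J y)) - br (J x) (J y) = 0)"

fun asc_series :: "('v::real_vector \<Rightarrow> 'v \<Rightarrow> 'v) \<Rightarrow> ('v \<Rightarrow> 'v) \<Rightarrow> nat \<Rightarrow> 'v set" where
  "asc_series br J 0 = {0}"
| "asc_series br J (Suc l) =
     {x. (\<forall>y. br x y \<in> asc_series br J l) \<and> (\<forall>y. br (J x) y \<in> asc_series br J l)}"

definition nilpotent_cs :: "('v::real_vector \<Rightarrow> 'v \<Rightarrow> 'v) \<Rightarrow> ('v \<Rightarrow> 'v) \<Rightarrow> bool" where
  "nilpotent_cs br J \<longleftrightarrow> (\<exists>t>0. asc_series br J t = UNIV)"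

definition step_cs :: "('v::real_vector \<Rightarrow> 'v \<Rightarrow> 'v) \<Rightarrow> ('v \<Rightarrow> 'v) \<Rightarrow> nat \<Rightarrow> bool" where
  "step_cs br J t \<longleftrightarrow> t > 0 \<and> asc_series br J t = UNIV \<and>
     (\<forall>s. 0 < s \<and> s < t \<longrightarrow> asc_series br J s \<noteq> UNIV)"

definition lie_isomorphic :: "('v::real_vector \<Rightarrow> 'v \<Rightarrow> 'v) \<Rightarrow> ('w::real_vector \<Rightarrow> 'w \<Rightarrow> 'w) \<Rightarrow> bool" where
  "lie_isomorphic br1 br2 \<longleftrightarrow> (\<exists>f. linear f \<and> bij f \<and> (\<forall>x y. f (br1 x y) = br2 (f x) (f y)))"

text \<open>f_3 = V \<oplus> \<Lambda>^2 V, realized on real^3 \<times> real^3: with e1,e2,e3 the basis of the first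
factor and e4,e5,e6 the basis of the second, [e1,e2]=e4, [e1,e3]=e5, [e2,e3]=e6.\<close>
definition f3_bracket :: "((real^3) \<times> (real^3)) \<Rightarrow> ((real^3) \<times> (real^3)) \<Rightarrow> ((real^3) \<times> (real^3))" where
  "f3_bracket p q = (let v = fst p; w = fst q in
     (0, vector [v$1 * w$2 - v$2 * w$1, v$1 * w$3 - v$3 * w$1, v$2 * w$3 - v$3 * w$2]))"

end

theory Submission
  imports Defs
begin

(* Let g = [n, n] be the derived algebra; it is central. For a complex structure J and w in g
   the Nijenhuis condition reduces to J [J w, y] = [J w, J y], so every bracket lies in a_2(J) and
   J is at most 3-step. If a_2(J) is proper, some J w with w in g is not central, and w, [J w, y],
   J [J w, y] are independent vectors of g. Then dim g >= 3, and three vectors complementing g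
   together with their three brackets form a basis, which gives an isomorphism with f_3.
   Conversely, a 2-step J on f_3 would restrict to the 3-dimensional centre, impossible since
   there det(J)^2 = det(-1) = -1.
   Existence is proved by cases on dim g: f_3 carries an explicit J; for dim g = 2 some ad q1 has
   rank 2 and a suitably perturbed basis is paired by J; for dim g <= 1 the bracket is a 2-form
   and a Darboux-type splitting into mutually commuting planes is paired by J. *)

lemma span_insert_iff:
  "x \<in> span (insert a S) \<longleftrightarrow> (\<exists>k y. y \<in> span S \<and> x = k *\<^sub>R a + y)"
  unfolding span_breakdown_eq by (metis add_diff_cancel_left' diff_add_cancel add.commute)

lemma span_pair_iff: "x \<in> span {a, b} \<longleftrightarrow> (\<exists>k l. x = k *\<^sub>R a + l *\<^sub>R b)"
  unfolding span_insert_iff[of x a] by (auto simp: span_singleton)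

lemma span_triple_iff:
  "x \<in> span {a, b, c} \<longleftrightarrow> (\<exists>k l m. x = k *\<^sub>R a + l *\<^sub>R b + m *\<^sub>R c)"
  unfolding span_insert_iff[of x a] span_pair_iff by (auto simp: add.assoc)

lemma independent_pair_iff:
  "independent {u, v} \<and> u \<noteq> v \<longleftrightarrow> (\<forall>s t. s *\<^sub>R u + t *\<^sub>R v = 0 \<longrightarrow> s = 0 \<and> t = 0)"
  (is "?indep \<longleftrightarrow> ?coeffs")
proof
  assume ?indep
  then have "v \<noteq> 0" and u: "u \<notin> span {v}" by (auto simp: independent_insert)
  show ?coeffs
  proof (intro allI impI)
    fix s t assume st: "s *\<^sub>R u + t *\<^sub>R v = 0"
    have "s = 0"
    proof (rule ccontr)
      assume "s \<noteq> 0"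
      have "s *\<^sub>R u = - (t *\<^sub>R v)" using st by (simp add: eq_neg_iff_add_eq_0)
      then have "(1 / s) *\<^sub>R (s *\<^sub>R u) = (1 / s) *\<^sub>R (- (t *\<^sub>R v))" by simp
      then have "u = (- t / s) *\<^sub>R v" using \<open>s \<noteq> 0\<close> by simp
      then show False using u by (metis insertI1 span_base span_scale)
    qed
    then show "s = 0 \<and> t = 0" using st \<open>v \<noteq> 0\<close> by simp
  qed
next
  assume coeffs: ?coeffs
  have "u \<noteq> v" using coeffs[rule_format, of 1 "-1"] by auto
  moreover have "v \<noteq> 0" using coeffs[rule_format, of 0 1] by auto
  moreover have "u \<notin> span {v}"
  proof
    assume "u \<in> span {v}"
    then obtain k where "u = k *\<^sub>R v" by (auto simp: span_singleton)
    then show False using coeffs[rule_format, of 1 "- k"] by simp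
  qed
  ultimately show ?indep by (simp add: independent_insert)
qed

lemma scaleR_multiple_if_dependent_pair:
  assumes "u \<noteq> 0" and "\<not> (independent {u, v} \<and> u \<noteq> v)"
  obtains k where "v = k *\<^sub>R u"
proof -
  have "v \<in> span {u}"
  proof (cases "u = v")
    case True
    then show ?thesis by (simp add: span_base)
  next
    case False
    then have "v \<noteq> u" by simp
    have "\<not> independent (insert v {u})" using assms(2) False by (simp add: insert_commute)
    then show ?thesis using assms(1) \<open>v \<noteq> u\<close> by (simp add: independent_insert)
  qed
  then show thesis using that by (auto simp: span_singleton)
qed

lemma spanning_set_card_le_DIM:
  fixes S :: "'a::euclidean_space set"
  assumes fin: "finite S" and card: "card S \<le> DIM('a)" and span: "span S = UNIV"
  shows "card S = DIM('a)" and "independent S"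
proof -
  have "DIM('a) \<le> card S"
    using dim_le_card[of UNIV S] span fin by simp
  then show "card S = DIM('a)" using card by linarith
  show "independent S"
    by (rule card_le_dim_spanning[of S UNIV]) (use span card fin in auto)
qed

lemma spanning_list_length_DIM:
  fixes xs :: "'a::euclidean_space list"
  assumes len: "length xs = DIM('a)" and span: "span (set xs) = UNIV"
  shows "distinct xs" and "independent (set xs)"
proof -
  have card: "card (set xs) \<le> DIM('a)" using card_length[of xs] len by simp
  show "distinct xs"
    using spanning_set_card_le_DIM(1)[OF _ card span] len by (simp add: card_distinct)
  show "independent (set xs)" using spanning_set_card_le_DIM(2)[OF _ card span] by simp
qed

lemma independent_extend_by_complement:
  fixes S :: "'a::euclidean_space set"
  assumes indep: "independent S" and decomp: "\<And>v. \<exists>s\<in>span S. v - s \<in> W"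
  obtains C where "C \<subseteq> W" and "card C = DIM('a) - card S" and "span (S \<union> C) = UNIV"
proof -
  obtain B where SB: "S \<subseteq> B" and BSW: "B \<subseteq> S \<union> W" and indB: "independent B"
      and spanB: "S \<union> W \<subseteq> span B"
    using maximal_independent_subset_extend[of S "S \<union> W"] indep by auto
  have "v \<in> span B" for v
  proof -
    obtain s where s: "s \<in> span S" and w: "v - s \<in> W" using decomp by blast
    have "s \<in> span B" using s span_mono[OF SB] by blast
    moreover have "v - s \<in> span B" using w spanB by blast
    ultimately show ?thesis using span_add by fastforce
  qed
  then have span: "span B = UNIV" by auto
  have finB: "finite B" and "card B \<le> DIM('a)" using independent_bound[OF indB] by auto
  then have cardB: "card B = DIM('a)" using spanning_set_card_le_DIM(1)[OF finB _ span] by simp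
  show thesis
  proof
    show "B - S \<subseteq> W" using BSW by blast
    show "card (B - S) = DIM('a) - card S"
      using card_Diff_subset[OF finite_subset[OF SB finB] SB] cardB by simp
    show "span (S \<union> (B - S)) = UNIV" using SB span by (simp add: Un_absorb1)
  qed
qed

lemma card_insert_not_in_span:
  assumes "finite S" and "a \<notin> span S"
  shows "card (insert a S) = Suc (card S)"
proof (rule card_insert_disjoint)
  show "finite S" by fact
  show "a \<notin> S" using assms(2) span_superset by blast
qed

lemma linear_inv:
  assumes lin: "linear f" and bij: "bij f"
  shows "linear (inv f)"
proof -
  have f_inv: "f (inv f x) = x" for x using bij by (simp add: bij_is_surj surj_f_inv_f)
  have inv_f: "inv f (f x) = x" for x using bij by (simp add: bij_is_inj)
  show ?thesis
    by (rule linearI) (metis f_inv inv_f linear_add[OF lin], metis f_inv inv_f linear_scale[OF lin])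
qed

lemma complex_structure_not_in_span_self:
  fixes J :: "'a::real_vector \<Rightarrow> 'a"
  assumes lin: "linear J" and JJ: "\<And>x. J (J x) = - x" and "s \<noteq> 0"
  shows "J s \<notin> span {s}"
proof
  assume "J s \<in> span {s}"
  then obtain k where k: "J s = k *\<^sub>R s" by (auto simp: span_singleton)
  then have "(k * k) *\<^sub>R s = - s" using JJ[of s] by (simp add: linear_scale[OF lin])
  then have "(1 + k * k) *\<^sub>R s = 0" by (simp add: scaleR_add_left)
  moreover have "1 + k * k \<noteq> 0" using zero_le_square[of k] by linarith
  ultimately show False using \<open>s \<noteq> 0\<close> by simp
qed

lemma matrix_uminus_id: "matrix (\<lambda>q::real^'n. - q) = (\<chi> i. (- 1) *s mat 1 $ i)"
  by (simp add: matrix_def vec_eq_iff mat_def axis_def)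

lemma det_matrix_uminus_id: "det (matrix (\<lambda>q::real^'n. - q)) = (- 1) ^ CARD('n)"
  unfolding matrix_uminus_id det_rows_mul by simp

lemma no_complex_structure_odd_dim:
  fixes M :: "real^'n \<Rightarrow> real^'n"
  assumes lin: "linear M" and MM: "\<And>q. M (M q) = - q" and odd: "odd CARD('n)"
  shows False
proof -
  have "M \<circ> M = (\<lambda>q. - q)" using MM by (simp add: fun_eq_iff)
  then have "matrix M ** matrix M = matrix (\<lambda>q::real^'n. - q)"
    using matrix_compose[OF lin lin] by simp
  then have "det (matrix M) * det (matrix M) = (- 1) ^ CARD('n)"
    by (metis det_mul det_matrix_uminus_id)
  then have "det (matrix M) * det (matrix M) = - 1" using odd by simp
  moreover have "det (matrix M) * det (matrix M) \<ge> 0" by simp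
  ultimately show False by linarith
qed

lemma asc_series_1: "asc_series br J 1 = {x. (\<forall>y. br x y = 0) \<and> (\<forall>y. br (J x) y = 0)}"
  by (simp add: One_nat_def)

lemma asc_series_numeral:
  "asc_series br J (numeral n) = {x. (\<forall>y. br x y \<in> asc_series br J (pred_numeral n)) \<and>
     (\<forall>y. br (J x) y \<in> asc_series br J (pred_numeral n))}"
  by (simp add: numeral_eq_Suc)

lemma complex_structure_transfer:
  fixes f :: "'a::real_vector \<Rightarrow> 'b::real_vector"
  assumes lin: "linear f" and bij: "bij f" and hom: "\<And>x y. f (br1 x y) = br2 (f x) (f y)"
    and cs: "complex_structure br2 J2"
  shows "complex_structure br1 (\<lambda>x. inv f (J2 (f x)))"
proof -
  define J where "J = (\<lambda>x. inv f (J2 (f x)))"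
  have f_inv: "f (inv f x) = x" for x using bij by (simp add: bij_is_surj surj_f_inv_f)
  have inv_f: "inv f (f x) = x" for x using bij by (simp add: bij_is_inj)
  have lin2: "linear J2" and JJ2: "\<And>x. J2 (J2 x) = - x"
    and N2: "\<And>x y. br2 x y + J2 (br2 (J2 x) y + br2 x (J2 y)) - br2 (J2 x) (J2 y) = 0"
    using cs unfolding complex_structure_def by auto
  have fJ: "f (J x) = J2 (f x)" for x unfolding J_def f_inv by simp
  have "linear J"
    using linear_compose[OF linear_compose[OF lin lin2] linear_inv[OF lin bij]]
    by (simp add: J_def o_def)
  moreover have "J (J x) = - x" for x
    unfolding J_def using f_inv JJ2 linear_neg[OF linear_inv[OF lin bij]] inv_f by simp
  moreover have "br1 x y + J (br1 (J x) y + br1 x (J y)) - br1 (J x) (J y) = 0" for x y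
  proof -
    have "f (br1 x y + J (br1 (J x) y + br1 x (J y)) - br1 (J x) (J y)) = 0"
      using N2[of "f x" "f y"] by (simp add: linear_add[OF lin] linear_diff[OF lin] fJ hom)
    then show ?thesis using bij linear_0[OF lin] by (metis bij_is_inj injD)
  qed
  ultimately have "complex_structure br1 J" unfolding complex_structure_def by blast
  then show ?thesis by (simp add: J_def)
qed

lemma asc_series_transfer:
  assumes lin: "linear f" and bij: "bij f" and hom: "\<And>x y. f (br1 x y) = br2 (f x) (f y)"
    and intertwine: "\<And>x. f (J1 x) = J2 (f x)"
  shows "asc_series br1 J1 k = f -` asc_series br2 J2 k"
proof (induction k)
  case 0
  have "f x = 0 \<longleftrightarrow> x = 0" for x using bij linear_0[OF lin] by (metis bij_is_inj injD)
  then show ?case by auto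
next
  case (Suc k)
  have "x \<in> asc_series br1 J1 (Suc k) \<longleftrightarrow> f x \<in> asc_series br2 J2 (Suc k)" for x
  proof -
    have "x \<in> asc_series br1 J1 (Suc k) \<longleftrightarrow>
        (\<forall>y. br2 (f x) (f y) \<in> asc_series br2 J2 k) \<and> (\<forall>y. br2 (J2 (f x)) (f y) \<in> asc_series br2 J2 k)"
      using Suc by (simp add: hom intertwine)
    also have "\<dots> \<longleftrightarrow>
        (\<forall>y. br2 (f x) y \<in> asc_series br2 J2 k) \<and> (\<forall>y. br2 (J2 (f x)) y \<in> asc_series br2 J2 k)"
      using bij by (metis bij_is_surj surjD)
    finally show ?thesis by simp
  qed
  then show ?case by auto
qed

lemma step_cs_transfer:
  assumes lin: "linear f" and bij: "bij f" and hom: "\<And>x y. f (br1 x y) = br2 (f x) (f y)"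
    and intertwine: "\<And>x. f (J1 x) = J2 (f x)"
  shows "step_cs br1 J1 t \<longleftrightarrow> step_cs br2 J2 t"
proof -
  have "asc_series br1 J1 s = UNIV \<longleftrightarrow> asc_series br2 J2 s = UNIV" for s
    unfolding asc_series_transfer[of f br1 br2 J1 J2, OF lin bij hom intertwine] using bij
    by (metis UNIV_I bij_is_surj subsetI subset_antisym surjD vimage_UNIV vimage_eq)
  then show ?thesis unfolding step_cs_def by simp
qed

section \<open>Lie brackets of step at most two\<close>

(* The Jacobi identity holds automatically once all brackets are central. *)
locale nil2_lie =
  fixes br :: "'v::euclidean_space \<Rightarrow> 'v \<Rightarrow> 'v"
  assumes bilinear_br: "bilinear br"
    and br_self: "\<And>x. br x x = 0"
    and br_br_left: "\<And>x y z. br (br x y) z = 0"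
begin

lemma bounded_bilinear_br: "bounded_bilinear br"
  using bilinear_br bilinear_conv_bounded_bilinear by blast

lemmas br_distribs =
  bounded_bilinear.add_left[OF bounded_bilinear_br]
  bounded_bilinear.add_right[OF bounded_bilinear_br]
  bounded_bilinear.scaleR_left[OF bounded_bilinear_br]
  bounded_bilinear.scaleR_right[OF bounded_bilinear_br]
  bounded_bilinear.minus_left[OF bounded_bilinear_br]
  bounded_bilinear.minus_right[OF bounded_bilinear_br]
  bounded_bilinear.diff_left[OF bounded_bilinear_br]
  bounded_bilinear.diff_right[OF bounded_bilinear_br]
  bounded_bilinear.zero_left[OF bounded_bilinear_br]
  bounded_bilinear.zero_right[OF bounded_bilinear_br]

lemma br_swap: "br x y = - br y x"
proof -
  have "br x y + br y x = br x x + br y x + (br x y + br y y)" by (simp add: br_self add.commute)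
  also have "\<dots> = br (x + y) (x + y)" by (simp only: br_distribs)
  also have "\<dots> = 0" by (rule br_self)
  finally show ?thesis by (rule eq_neg_iff_add_eq_0[THEN iffD2])
qed

definition derived :: "'v set" where
  "derived = span {br x y | x y. True}"

definition centralizer :: "'v set \<Rightarrow> 'v set" where
  "centralizer S = {z. \<forall>s\<in>S. br s z = 0}"

lemma subspace_derived: "subspace derived"
  unfolding derived_def by (rule subspace_span)

lemma br_in_derived: "br x y \<in> derived"
  unfolding derived_def by (rule span_base) blast

lemma span_subset_derived: "T \<subseteq> derived \<Longrightarrow> span T \<subseteq> derived"
  using subspace_derived by (simp add: span_minimal)

lemma derived_subset_span: "(\<And>x y. br x y \<in> span W) \<Longrightarrow> derived \<subseteq> span W"
  unfolding derived_def by (rule span_minimal) (auto intro: subspace_span)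

lemma subspace_centralizer: "subspace (centralizer S)"
  unfolding subspace_def centralizer_def by (auto simp: br_distribs)

lemma derived_subset_centralizer: "derived \<subseteq> centralizer S"
proof -
  have "br z (br x y) = 0" for x y z using br_swap[of z] br_br_left by simp
  then show ?thesis
    unfolding derived_def centralizer_def
    by (intro span_minimal) (auto intro: subspace_centralizer[unfolded centralizer_def])
qed

lemma derived_central_right: "g \<in> derived \<Longrightarrow> br z g = 0"
  using derived_subset_centralizer[of UNIV] by (auto simp: centralizer_def)

lemma derived_central_left: "g \<in> derived \<Longrightarrow> br g z = 0"
  using derived_central_right br_swap[of g z] by simp

definition nijenhuis :: "('v \<Rightarrow> 'v) \<Rightarrow> 'v \<Rightarrow> 'v \<Rightarrow> 'v" where
  "nijenhuis J x y = br x y + J (br (J x) y + br x (J y)) - br (J x) (J y)"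

lemma complex_structure_iff:
  "complex_structure br J \<longleftrightarrow> linear J \<and> (\<forall>x. J (J x) = - x) \<and> (\<forall>x y. nijenhuis J x y = 0)"
  unfolding complex_structure_def nijenhuis_def ..

lemma nijenhuis_bilinear: "linear J \<Longrightarrow> bilinear (nijenhuis J)"
  unfolding bilinear_def nijenhuis_def
  by (auto intro!: linearI simp: br_distribs linear_add linear_scale algebra_simps)

lemma nijenhuis_J_left:
  assumes "linear J" and "\<And>x. J (J x) = - x"
  shows "nijenhuis J (J x) y = - J (nijenhuis J x y)"
  using assms by (simp add: nijenhuis_def br_distribs linear_add linear_diff linear_neg algebra_simps)

lemma nijenhuis_J_right:
  assumes "linear J" and "\<And>x. J (J x) = - x"
  shows "nijenhuis J x (J y) = - J (nijenhuis J x y)"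
  using assms by (simp add: nijenhuis_def br_distribs linear_add linear_diff linear_neg algebra_simps)

lemma nijenhuis_swap:
  assumes "linear J"
  shows "nijenhuis J y x = - nijenhuis J x y"
  using br_swap[of y x] br_swap[of "J y" x] br_swap[of y "J x"] br_swap[of "J y" "J x"]
  by (simp add: nijenhuis_def linear_add[OF assms] linear_diff[OF assms] linear_neg[OF assms]
      algebra_simps)

lemma nijenhuis_self:
  assumes "linear J"
  shows "nijenhuis J x x = 0"
proof -
  have "nijenhuis J x x + nijenhuis J x x = 0"
    using nijenhuis_swap[OF assms, of x x] by (simp add: eq_neg_iff_add_eq_0)
  then have "(2::real) *\<^sub>R nijenhuis J x x = 0" by (simp add: scaleR_2)
  then show ?thesis by simp
qed

lemma nijenhuis_eq_0I:
  assumes lin: "linear J" and JJ: "\<And>x. J (J x) = - x"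
    and span: "span (S \<union> J ` S) = UNIV"
    and gen: "\<And>a b. a \<in> S \<Longrightarrow> b \<in> S \<Longrightarrow> nijenhuis J a b = 0"
  shows "nijenhuis J x y = 0"
proof -
  have "nijenhuis J a b = 0" if "a \<in> S \<union> J ` S" and "b \<in> S \<union> J ` S" for a b
    using that gen
    by (auto simp: nijenhuis_J_left[OF lin JJ] nijenhuis_J_right[OF lin JJ] linear_0[OF lin])
  moreover have "bilinear (\<lambda>x y. 0 :: 'v)" by (simp add: bilinear_def linear_zero)
  ultimately show ?thesis
    using bilinear_eq[OF nijenhuis_bilinear[OF lin], where g = "\<lambda>x y. 0" and S = UNIV
        and B = "S \<union> J ` S" and T = UNIV and C = "S \<union> J ` S"] span
    by auto
qed

lemma complex_structure_from_pairing:
  assumes dim: "DIM('v) = 6" and span: "span {v1, v2, v3, v4, v5, v6} = UNIV"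
    and nij: "\<And>J. linear J \<Longrightarrow> J v1 = v2 \<Longrightarrow> J v2 = - v1 \<Longrightarrow> J v3 = v4 \<Longrightarrow> J v4 = - v3
      \<Longrightarrow> J v5 = v6 \<Longrightarrow> J v6 = - v5
      \<Longrightarrow> nijenhuis J v1 v3 = 0 \<and> nijenhuis J v1 v5 = 0 \<and> nijenhuis J v3 v5 = 0"
  shows "\<exists>J. complex_structure br J"
proof -
  have distinct: "distinct [v1, v2, v3, v4, v5, v6]" and indep: "independent {v1, v2, v3, v4, v5, v6}"
    using spanning_list_length_DIM[of "[v1, v2, v3, v4, v5, v6]"] dim span by auto
  define f where "f x = (if x = v1 then v2 else if x = v2 then - v1 else if x = v3 then v4
    else if x = v4 then - v3 else if x = v5 then v6 else - v5)" for x
  obtain J where lin: "linear J" and agree: "\<forall>x\<in>{v1, v2, v3, v4, v5, v6}. J x = f x"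
    using linear_independent_extend[OF indep] by blast
  have J: "J v1 = v2" "J v2 = - v1" "J v3 = v4" "J v4 = - v3" "J v5 = v6" "J v6 = - v5"
    using agree distinct by (auto simp: f_def)
  have JJ_basis: "(J \<circ> J) v = - v" if "v \<in> {v1, v2, v3, v4, v5, v6}" for v
    using that J linear_neg[OF lin] by auto
  have JJ: "J (J x) = - x" for x
    using linear_eq_on_span[where B = "{v1, v2, v3, v4, v5, v6}",
        OF linear_compose[OF lin lin] linear_uminus JJ_basis] span
    by auto
  have n: "nijenhuis J v1 v3 = 0" "nijenhuis J v1 v5 = 0" "nijenhuis J v3 v5 = 0"
    using nij[OF lin J] by auto
  have "nijenhuis J x y = 0" for x y
  proof (rule nijenhuis_eq_0I[OF lin JJ, of "{v1, v3, v5}"])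
    show "span ({v1, v3, v5} \<union> J ` {v1, v3, v5}) = UNIV"
      using span by (simp add: J insert_commute)
    have "nijenhuis J b a = 0" if "nijenhuis J a b = 0" for a b
      using that nijenhuis_swap[OF lin, of b a] by simp
    then show "nijenhuis J a b = 0" if "a \<in> {v1, v3, v5}" and "b \<in> {v1, v3, v5}" for a b
      using that n nijenhuis_self[OF lin] by blast
  qed
  then show ?thesis using lin JJ by (auto simp: complex_structure_iff)
qed

lemma complex_structure_of_commuting_planes:
  assumes dim: "DIM('v) = 6" and span: "span {v1, v2, v3, v4, v5, v6} = UNIV"
    and P12: "{v3, v4, v5, v6} \<subseteq> centralizer {v1, v2}"
    and P34: "{v5, v6} \<subseteq> centralizer {v3, v4}"
  shows "\<exists>J. complex_structure br J"
proof (rule complex_structure_from_pairing[OF dim span])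
  fix J :: "'v \<Rightarrow> 'v"
  assume lin: "linear J" and "J v1 = v2" "J v2 = - v1" "J v3 = v4" "J v4 = - v3" "J v5 = v6"
  then show "nijenhuis J v1 v3 = 0 \<and> nijenhuis J v1 v5 = 0 \<and> nijenhuis J v3 v5 = 0"
    using P12 P34 linear_0[OF lin] by (simp add: nijenhuis_def centralizer_def)
qed

lemma J_br_J_central:
  assumes cs: "complex_structure br J" and w: "w \<in> derived"
  shows "J (br (J w) y) = br (J w) (J y)"
proof -
  have "nijenhuis J w y = 0" using cs by (simp add: complex_structure_iff)
  then show ?thesis using derived_central_left[OF w] by (simp add: nijenhuis_def)
qed

lemma asc_series_3_eq_UNIV:
  assumes cs: "complex_structure br J"
  shows "asc_series br J 3 = UNIV"
proof -
  have lin: "linear J" using cs by (simp add: complex_structure_def)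
  have "w \<in> asc_series br J 2" if "w \<in> derived" for w
    using J_br_J_central[OF cs that] derived_central_left[OF that] linear_0[OF lin]
    by (simp add: asc_series_numeral asc_series_1 br_br_left br_distribs)
  then show ?thesis by (auto simp: asc_series_numeral br_in_derived)
qed

lemma step_cs_3_iff:
  assumes cs: "complex_structure br J" and nz: "br x y \<noteq> 0"
  shows "step_cs br J 3 \<longleftrightarrow> asc_series br J 2 \<noteq> UNIV"
proof -
  have "asc_series br J 1 \<noteq> UNIV" using nz by (auto simp: asc_series_1)
  moreover have "0 < s \<and> s < 3 \<longleftrightarrow> s = 1 \<or> s = (2::nat)" for s by auto
  ultimately show ?thesis unfolding step_cs_def using asc_series_3_eq_UNIV[OF cs] by auto
qed

lemma asc_series_2_eq_UNIV_iff:
  "asc_series br J 2 = UNIV \<longleftrightarrow> (\<forall>x y z. br (J (br x y)) z = 0)"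
  by (auto simp: asc_series_numeral asc_series_1 br_br_left)

lemma three_le_dim_derived:
  assumes cs: "complex_structure br J" and not2: "asc_series br J 2 \<noteq> UNIV"
  shows "3 \<le> dim derived"
proof -
  have lin: "linear J" and JJ: "\<And>x. J (J x) = - x" using cs by (auto simp: complex_structure_def)
  obtain w y0 where w: "w \<in> derived" and s0: "br (J w) y0 \<noteq> 0"
    using not2 br_in_derived unfolding asc_series_2_eq_UNIV_iff by blast
  define s where "s = br (J w) y0"
  have Js: "J s = br (J w) (J y0)" using J_br_J_central[OF cs w] by (simp add: s_def)
  have in_derived: "{w, J s, s} \<subseteq> derived"
    unfolding Js using w by (simp add: s_def br_in_derived)
  have "s \<noteq> 0" using s0 by (simp add: s_def)
  have Js_s: "J s \<notin> span {s}" by (rule complex_structure_not_in_span_self[OF lin JJ \<open>s \<noteq> 0\<close>])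
  have w_Js_s: "w \<notin> span {J s, s}"
  proof
    assume "w \<in> span {J s, s}"
    then obtain k l where "w = k *\<^sub>R J s + l *\<^sub>R s" by (auto simp: span_pair_iff)
    then have "J w = (- k) *\<^sub>R s + l *\<^sub>R J s"
      by (simp add: linear_add[OF lin] linear_scale[OF lin] JJ)
    moreover have "(- k) *\<^sub>R s + l *\<^sub>R J s \<in> span {J s, s}"
      by (intro span_add span_scale span_base) auto
    ultimately have "J w \<in> span {J s, s}" by simp
    then have "J w \<in> derived" using span_subset_derived in_derived by blast
    then show False using s0 derived_central_left by blast
  qed
  have "independent {w, J s, s}"
    using w_Js_s Js_s \<open>s \<noteq> 0\<close> by (simp add: independent_insertI independent_insert)
  moreover have "card {w, J s, s} = 3"
  proof -
    have "w \<notin> {J s, s}" using w_Js_s span_superset by blast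
    moreover have "J s \<noteq> s" using Js_s span_superset by blast
    ultimately show ?thesis by simp
  qed
  ultimately show ?thesis using independent_card_le_dim[OF in_derived] by simp
qed

end

section \<open>The free 2-step nilpotent Lie algebra of rank 3\<close>

lemma f3_bracket_eq:
  "f3_bracket p q = (0, vector [fst p $ 1 * fst q $ 2 - fst p $ 2 * fst q $ 1,
     fst p $ 1 * fst q $ 3 - fst p $ 3 * fst q $ 1, fst p $ 2 * fst q $ 3 - fst p $ 3 * fst q $ 2])"
  by (simp add: f3_bracket_def Let_def)

interpretation f3: nil2_lie f3_bracket
proof unfold_locales
  show "bilinear f3_bracket"
    unfolding bilinear_def
    by (auto intro!: linearI simp: f3_bracket_eq vec_eq_iff forall_3 vector_3 algebra_simps)
  show "f3_bracket x x = 0" for x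
    by (simp add: f3_bracket_eq vec_eq_iff forall_3 vector_3 zero_prod_def)
  show "f3_bracket (f3_bracket x y) z = 0" for x y z
    by (simp add: f3_bracket_eq vec_eq_iff forall_3 vector_3 zero_prod_def)
qed

(* J e1 = e6, J e3 = e2, J e5 = e4 in the basis e1, ..., e6 of f_3. *)
definition f3_J :: "(real^3) \<times> (real^3) \<Rightarrow> (real^3) \<times> (real^3)" where
  "f3_J p = (vector [- snd p $ 3, fst p $ 3, - fst p $ 2], vector [snd p $ 2, - snd p $ 1, fst p $ 1])"

lemma complex_structure_f3_J: "complex_structure f3_bracket f3_J"
  unfolding complex_structure_def
proof (intro conjI allI)
  show "linear f3_J"
    by (rule linearI) (auto simp: f3_J_def vec_eq_iff forall_3 vector_3)
  show "f3_J (f3_J x) = - x" for x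
    by (simp add: f3_J_def vec_eq_iff forall_3 vector_3 prod_eq_iff)
  show "f3_bracket x y + f3_J (f3_bracket (f3_J x) y + f3_bracket x (f3_J y))
      - f3_bracket (f3_J x) (f3_J y) = 0" for x y
    by (simp add: f3_J_def f3_bracket_eq vec_eq_iff forall_3 vector_3 prod_eq_iff algebra_simps)
qed

lemma f3_central_fst_eq_0:
  assumes "\<And>z. f3_bracket c z = 0"
  shows "fst c = 0"
proof -
  have "f3_bracket c (vector [1, 0, 0], 0) = 0" "f3_bracket c (vector [0, 1, 0], 0) = 0"
    using assms by auto
  then show ?thesis by (simp add: f3_bracket_eq vec_eq_iff forall_3 vector_3 zero_prod_def)
qed

lemma f3_step_3:
  assumes cs: "complex_structure f3_bracket J"
  shows "step_cs f3_bracket J 3"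
proof -
  have lin: "linear J" and JJ: "\<And>x. J (J x) = - x" using cs by (auto simp: complex_structure_def)
  have "asc_series f3_bracket J 2 \<noteq> UNIV"
  proof
    assume a2: "asc_series f3_bracket J 2 = UNIV"
    have central: "fst (J (f3_bracket p q)) = 0" for p q
      using a2 f3_central_fst_eq_0 unfolding f3.asc_series_2_eq_UNIV_iff by blast
    have "(0, q) = f3_bracket (vector [1, 0, 0], 0) (vector [0, q $ 1, q $ 2], 0)
        + f3_bracket (vector [0, 1, 0], 0) (vector [0, 0, q $ 3], 0)" for q
      by (simp add: f3_bracket_eq vec_eq_iff forall_3 vector_3)
    then have fst_J: "fst (J (0, q)) = 0" for q
      by (metis central linear_add[OF lin] fst_add add_0)
    (* J preserves the centre 0 \<times> R^3, so it restricts to a complex structure M on R^3. *)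
    define M where "M q = snd (J (0, q))" for q
    have JM: "J (0, q) = (0, M q)" for q using fst_J[of q] by (simp add: M_def prod_eq_iff)
    have "linear M"
    proof (rule linearI)
      show "M (a + b) = M a + M b" for a b
        using linear_add[OF lin, of "(0, a)" "(0, b)"] by (simp add: JM)
      show "M (r *\<^sub>R a) = r *\<^sub>R M a" for r a
        using linear_scale[OF lin, of r "(0, a)"] by (simp add: JM)
    qed
    moreover have "M (M q) = - q" for q using JJ[of "(0, q)"] by (simp add: JM)
    ultimately show False using no_complex_structure_odd_dim[of M] by simp
  qed
  moreover have "f3_bracket (vector [1, 0, 0], 0) (vector [0, 1, 0], 0) \<noteq> 0"
    by (simp add: f3_bracket_eq vec_eq_iff forall_3 vector_3 zero_prod_def)
  ultimately show ?thesis using f3.step_cs_3_iff[OF cs] by blast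
qed

section \<open>Derived algebras of dimension at least three\<close>

context nil2_lie
begin

lemma br_mod_derived:
  assumes z: "z \<in> derived" and z': "z' \<in> derived"
  shows "br (k1 *\<^sub>R a + k2 *\<^sub>R b + k3 *\<^sub>R c + z) (l1 *\<^sub>R a + l2 *\<^sub>R b + l3 *\<^sub>R c + z') =
    (k1 * l2 - k2 * l1) *\<^sub>R br a b + (k1 * l3 - k3 * l1) *\<^sub>R br a c + (k2 * l3 - k3 * l2) *\<^sub>R br b c"
  using br_swap[of b a] br_swap[of c a] br_swap[of c b]
  by (simp add: br_distribs br_self derived_central_left[OF z] derived_central_right[OF z']
      algebra_simps)

lemma derived_subset_span_brackets:
  assumes span: "span ({a, b, c} \<union> derived) = UNIV"
  shows "derived \<subseteq> span {br a b, br a c, br b c}"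
proof (rule derived_subset_span)
  have decomp: "\<exists>k1 k2 k3 z. z \<in> derived \<and> x = k1 *\<^sub>R a + k2 *\<^sub>R b + k3 *\<^sub>R c + z" for x
  proof -
    have "x \<in> span ({a, b, c} \<union> derived)" using span by simp
    then obtain u z where u: "u \<in> span {a, b, c}" and z: "z \<in> span derived" and "x = u + z"
      unfolding span_Un by blast
    moreover obtain k l m where "u = k *\<^sub>R a + l *\<^sub>R b + m *\<^sub>R c" using u span_triple_iff by blast
    moreover have "z \<in> derived" using z span_subset_derived[OF order_refl] by blast
    ultimately show ?thesis by blast
  qed
  fix x y
  obtain k1 k2 k3 z where z: "z \<in> derived" and x: "x = k1 *\<^sub>R a + k2 *\<^sub>R b + k3 *\<^sub>R c + z"
    using decomp by blast
  obtain l1 l2 l3 z' where z': "z' \<in> derived" and y: "y = l1 *\<^sub>R a + l2 *\<^sub>R b + l3 *\<^sub>R c + z'"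
    using decomp by blast
  show "br x y \<in> span {br a b, br a c, br b c}"
    unfolding x y br_mod_derived[OF z z'] span_triple_iff by blast
qed

lemma exists_generators_with_brackets_spanning:
  assumes dim: "DIM('v) = 6" and three: "3 \<le> dim derived"
  obtains a b c where "span {a, b, c, br a b, br a c, br b c} = UNIV"
proof -
  obtain T where T: "T \<subseteq> derived" "independent T" "card T = 3"
  proof -
    obtain B where "B \<subseteq> derived" "independent B" "derived \<subseteq> span B" "card B = dim derived"
      by (rule basis_exists)
    moreover have "3 \<le> card B" using three \<open>card B = dim derived\<close> by simp
    then obtain T where "T \<subseteq> B" "card T = 3" "finite T" by (rule obtain_subset_with_card_n)
    ultimately show thesis using that independent_mono[of B T] by blast
  qed
  obtain B where TB: "T \<subseteq> B" and indB: "independent B" and "UNIV \<subseteq> span B"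
    using maximal_independent_subset_extend[of T UNIV] T by auto
  then have spanB: "span B = UNIV" by auto
  have "finite B" and "card B \<le> 6" using independent_bound[OF indB] dim by auto
  then have "card B = 6" using spanning_set_card_le_DIM(1)[OF _ _ spanB] dim by simp
  then have "card (B - T) = 3"
    using card_Diff_subset[OF finite_subset[OF TB \<open>finite B\<close>] TB] T(3) by simp
  then obtain a b c where "B - T = {a, b, c}" unfolding card_3_iff by blast
  then have "B \<subseteq> {a, b, c} \<union> derived" using T(1) by blast
  then have "UNIV \<subseteq> span ({a, b, c} \<union> derived)" using spanB span_mono by blast
  then have span_abc: "span ({a, b, c} \<union> derived) = UNIV" by auto
  let ?S = "{br a b, br a c, br b c}"
  have "derived \<subseteq> span ?S" using span_abc by (rule derived_subset_span_brackets)
  then have "{a, b, c} \<union> derived \<subseteq> span ({a, b, c} \<union> ?S)"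
    using span_mono[of ?S "{a, b, c} \<union> ?S"] span_superset[of "{a, b, c} \<union> ?S"] by blast
  then have "span ({a, b, c} \<union> derived) \<subseteq> span ({a, b, c} \<union> ?S)"
    by (rule span_minimal[OF _ subspace_span])
  then have "span ({a, b, c} \<union> ?S) = UNIV" using span_abc by auto
  then show thesis using that by (simp add: insert_commute)
qed

lemma lie_isomorphic_f3_if_spanning:
  assumes dim: "DIM('v) = 6" and span: "span {a, b, c, br a b, br a c, br b c} = UNIV"
  shows "lie_isomorphic br f3_bracket"
proof -
  define g where "g p = (fst p $ 1) *\<^sub>R a + (fst p $ 2) *\<^sub>R b + (fst p $ 3) *\<^sub>R c +
      ((snd p $ 1) *\<^sub>R br a b + (snd p $ 2) *\<^sub>R br a c + (snd p $ 3) *\<^sub>R br b c)"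
    for p :: "(real^3) \<times> (real^3)"
  have lin: "linear g" by (rule linearI) (simp_all add: g_def algebra_simps)
  have "a = g (vector [1, 0, 0], 0)" "b = g (vector [0, 1, 0], 0)" "c = g (vector [0, 0, 1], 0)"
    "br a b = g (0, vector [1, 0, 0])" "br a c = g (0, vector [0, 1, 0])"
    "br b c = g (0, vector [0, 0, 1])"
    by (simp_all add: g_def vector_3)
  then have "{a, b, c, br a b, br a c, br b c} \<subseteq> range g" by auto
  then have "span {a, b, c, br a b, br a c, br b c} \<subseteq> range g"
    by (rule span_minimal[OF _ linear_subspace_image[OF lin subspace_UNIV]])
  then have "surj g" using span by auto
  then obtain h where lin_h: "linear h" and hg: "\<And>p. h (g p) = p" and gh: "\<And>x. g (h x) = x"
    using eucl.linear_surjective_isomorphism[OF lin] dim by auto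
  have hom_g: "br (g p) (g q) = g (f3_bracket p q)" for p q
  proof -
    have "(snd p $ 1) *\<^sub>R br a b + (snd p $ 2) *\<^sub>R br a c + (snd p $ 3) *\<^sub>R br b c \<in> derived"
      for p :: "(real^3) \<times> (real^3)"
      by (intro subspace_add[OF subspace_derived] subspace_scale[OF subspace_derived] br_in_derived)
    then show ?thesis by (simp add: g_def f3_bracket_eq vector_3 br_mod_derived)
  qed
  have "h (br x y) = f3_bracket (h x) (h y)" for x y
    using hom_g[of "h x" "h y"] gh hg by metis
  moreover have "bij h" using hg gh by (metis bijI')
  ultimately show ?thesis unfolding lie_isomorphic_def using lin_h by blast
qed

lemma lie_isomorphic_f3:
  assumes "DIM('v) = 6" and "3 \<le> dim derived"
  shows "lie_isomorphic br f3_bracket"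
  using exists_generators_with_brackets_spanning[OF assms] lie_isomorphic_f3_if_spanning[OF assms(1)]
  by metis

lemma step_3_complex_structure_iff_f3:
  assumes dim: "DIM('v) = 6" and nz: "br x y \<noteq> 0"
  shows "(\<exists>J. complex_structure br J \<and> step_cs br J 3) \<longleftrightarrow> lie_isomorphic br f3_bracket"
proof
  assume "\<exists>J. complex_structure br J \<and> step_cs br J 3"
  then obtain J where "complex_structure br J" and "asc_series br J 2 \<noteq> UNIV"
    using step_cs_3_iff[OF _ nz] by blast
  then show "lie_isomorphic br f3_bracket" using three_le_dim_derived lie_isomorphic_f3[OF dim] by blast
next
  assume "lie_isomorphic br f3_bracket"
  then obtain f where lin: "linear f" and bij: "bij f" and hom: "\<And>x y. f (br x y) = f3_bracket (f x) (f y)"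
    unfolding lie_isomorphic_def by blast
  define J where "J = (\<lambda>x. inv f (f3_J (f x)))"
  have "f (J x) = f3_J (f x)" for x using bij by (simp add: J_def bij_is_surj surj_f_inv_f)
  then have "step_cs br J 3"
    using step_cs_transfer[of f br f3_bracket J f3_J, OF lin bij hom] f3_step_3[OF complex_structure_f3_J]
    by blast
  moreover have "complex_structure br J"
    using complex_structure_transfer[OF lin bij hom complex_structure_f3_J] by (simp add: J_def)
  ultimately show "\<exists>J. complex_structure br J \<and> step_cs br J 3" by blast
qed

section \<open>Derived algebras of dimension at most one\<close>

lemma independent_insert_pair_centralizer:
  assumes xy: "br x y \<noteq> 0" and indep: "independent S" and S: "S \<subseteq> centralizer {x, y}"
  shows "independent (insert x (insert y S))" and "x \<notin> insert y S" and "y \<notin> S"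
proof -
  have span_S: "span S \<subseteq> centralizer {x, y}" using S subspace_centralizer by (rule span_minimal)
  have y: "y \<notin> span S"
  proof
    assume "y \<in> span S"
    then have "br x y = 0" using span_S by (auto simp: centralizer_def)
    then show False using xy by simp
  qed
  have x: "x \<notin> span (insert y S)"
  proof
    assume "x \<in> span (insert y S)"
    then obtain k where "x - k *\<^sub>R y \<in> span S" by (auto simp: span_breakdown_eq)
    then have "br y (x - k *\<^sub>R y) = 0" using span_S by (auto simp: centralizer_def)
    then have "br x y = 0" by (simp add: br_distribs br_self br_swap[of y x])
    then show False using xy by simp
  qed
  show "independent (insert x (insert y S))" using x y indep by (simp add: independent_insertI)
  show "x \<notin> insert y S" and "y \<notin> S" using x y span_superset by blast+
qed

lemma exists_span_pair_diff_in_centralizer: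
  assumes derived: "derived \<subseteq> span {br x y}"
  shows "\<exists>s\<in>span {x, y}. z - s \<in> centralizer {x, y}"
proof -
  obtain k where k: "br z y = k *\<^sub>R br x y"
    using derived br_in_derived[of z y] by (auto simp: span_singleton)
  obtain l where l: "br z x = l *\<^sub>R br x y"
    using derived br_in_derived[of z x] by (auto simp: span_singleton)
  have "k *\<^sub>R x - l *\<^sub>R y \<in> span {x, y}"
    unfolding span_pair_iff by (metis scaleR_minus_left diff_conv_add_uminus)
  moreover have "z - (k *\<^sub>R x - l *\<^sub>R y) \<in> centralizer {x, y}"
    using k l br_swap[of x z] br_swap[of y z] br_swap[of y x]
    by (simp add: centralizer_def br_distribs br_self)
  ultimately show ?thesis by blast
qed

lemma complex_structure_exists_abelian_centralizer:
  assumes dim: "DIM('v) = 6" and xy: "br x y \<noteq> 0" and derived: "derived \<subseteq> span {br x y}"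
    and abelian: "\<And>u v. u \<in> centralizer {x, y} \<Longrightarrow> v \<in> centralizer {x, y} \<Longrightarrow> br u v = 0"
  shows "\<exists>J. complex_structure br J"
proof -
  have indep: "independent {x, y}" and "x \<noteq> y"
    using independent_insert_pair_centralizer[OF xy independent_empty empty_subsetI] by auto
  obtain C where C: "C \<subseteq> centralizer {x, y}" and card: "card C = DIM('v) - card {x, y}"
      and span: "span ({x, y} \<union> C) = UNIV"
    using independent_extend_by_complement[OF indep exists_span_pair_diff_in_centralizer[OF derived]]
    by blast
  have "card C = 4" using card dim \<open>x \<noteq> y\<close> by simp
  then have "\<exists>w1 w2 w3 w4. C = {w1, w2, w3, w4}" by (auto simp: numeral_eq_Suc card_Suc_eq)
  then obtain w1 w2 w3 w4 where C_eq: "C = {w1, w2, w3, w4}" by blast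
  show ?thesis
  proof (rule complex_structure_of_commuting_planes[OF dim])
    show "span {x, y, w1, w2, w3, w4} = UNIV" using span C_eq by (simp add: insert_commute)
    show "{w1, w2, w3, w4} \<subseteq> centralizer {x, y}" using C C_eq by simp
    then show "{w3, w4} \<subseteq> centralizer {w1, w2}" using abelian unfolding centralizer_def by blast
  qed
qed

lemma derived_subset_span_br:
  assumes derived: "derived \<subseteq> span {br x y}" and uv: "br u v \<noteq> 0"
  shows "derived \<subseteq> span {br u v}"
proof -
  obtain k where "br u v = k *\<^sub>R br x y"
    using derived br_in_derived[of u v] by (auto simp: span_singleton)
  then have "br x y = (1 / k) *\<^sub>R br u v" using uv by auto
  then have "{br x y} \<subseteq> span {br u v}" by (simp add: span_base span_scale)
  then have "span {br x y} \<subseteq> span {br u v}" by (rule span_minimal[OF _ subspace_span])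
  then show ?thesis using derived by blast
qed

lemma complex_structure_exists_two_pairs:
  assumes dim: "DIM('v) = 6" and xy: "br x y \<noteq> 0" and derived: "derived \<subseteq> span {br x y}"
    and uv: "{u, v} \<subseteq> centralizer {x, y}" and uv_ne: "br u v \<noteq> 0"
  shows "\<exists>J. complex_structure br J"
proof -
  have derived_uv: "derived \<subseteq> span {br u v}" using derived uv_ne by (rule derived_subset_span_br)
  define S where "S = {x, y, u, v}"
  have indep_uv: "independent {u, v}" and "u \<noteq> v"
    using independent_insert_pair_centralizer[OF uv_ne independent_empty empty_subsetI] by auto
  have indep: "independent S" and "x \<notin> {y, u, v}" and "y \<notin> {u, v}"
    using independent_insert_pair_centralizer[OF xy indep_uv uv] by (simp_all add: S_def)
  then have "card S = 4" using \<open>u \<noteq> v\<close> by (simp add: S_def)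
  have centralizer_S: "centralizer S = centralizer {x, y} \<inter> centralizer {u, v}"
    by (auto simp: S_def centralizer_def)
  have decomp: "\<exists>s\<in>span S. z - s \<in> centralizer S" for z
  proof -
    obtain s1 where s1: "s1 \<in> span {x, y}" "z - s1 \<in> centralizer {x, y}"
      using exists_span_pair_diff_in_centralizer[OF derived] by blast
    obtain s2 where s2: "s2 \<in> span {u, v}" "z - s1 - s2 \<in> centralizer {u, v}"
      using exists_span_pair_diff_in_centralizer[OF derived_uv] by blast
    have "s2 \<in> centralizer {x, y}" using s2(1) span_minimal[OF uv subspace_centralizer] by blast
    then have "z - s1 - s2 \<in> centralizer {x, y}"
      using s1(2) subspace_diff[OF subspace_centralizer] by blast
    then have "z - (s1 + s2) \<in> centralizer S" using s2(2) by (simp add: centralizer_S diff_diff_eq)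
    moreover have "s1 + s2 \<in> span S"
      using s1(1) s2(1) span_mono[of "{x, y}" S] span_mono[of "{u, v}" S]
      by (auto simp: S_def intro: span_add)
    ultimately show ?thesis by blast
  qed
  obtain C where C: "C \<subseteq> centralizer S" and card: "card C = DIM('v) - card S"
      and span: "span (S \<union> C) = UNIV"
    using independent_extend_by_complement[OF indep decomp] by blast
  have "card C = 2" using card dim \<open>card S = 4\<close> by simp
  then obtain w1 w2 where C_eq: "C = {w1, w2}" unfolding card_2_iff by blast
  show ?thesis
  proof (rule complex_structure_of_commuting_planes[OF dim])
    show "span {x, y, u, v, w1, w2} = UNIV" using span C_eq by (simp add: S_def insert_commute)
    show "{u, v, w1, w2} \<subseteq> centralizer {x, y}" using uv C C_eq centralizer_S by auto
    show "{w1, w2} \<subseteq> centralizer {u, v}" using C C_eq centralizer_S by auto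
  qed
qed

lemma complex_structure_exists_dim_derived_le_1:
  assumes dim: "DIM('v) = 6" and xy: "br x y \<noteq> 0" and le1: "dim derived \<le> 1"
  shows "\<exists>J. complex_structure br J"
proof -
  have derived: "derived \<subseteq> span {br x y}"
    by (rule card_ge_dim_independent) (use br_in_derived xy le1 in \<open>auto simp: independent_insert\<close>)
  show ?thesis
  proof (cases "\<exists>u\<in>centralizer {x, y}. \<exists>v\<in>centralizer {x, y}. br u v \<noteq> 0")
    case True
    then show ?thesis using complex_structure_exists_two_pairs[OF dim xy derived] by blast
  next
    case False
    then show ?thesis using complex_structure_exists_abelian_centralizer[OF dim xy derived] by blast
  qed
qed

end

section \<open>Two-dimensional derived algebras\<close>

lemma exists_123_not_root: "\<exists>t\<in>{1, 2, 3 :: real}. 1 + t * p + t * t * q \<noteq> 0"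
proof (rule ccontr)
  assume "\<not> ?thesis"
  then have "1 + p + q = 0" "1 + 2 * p + 4 * q = 0" "1 + 3 * p + 9 * q = 0" by auto
  then show False by linarith
qed

lemma exists_perturbation_independent_pair:
  assumes indep: "independent {A, B}" "A \<noteq> B" and P: "P \<in> span {A, B}" and Q: "Q \<in> span {A, B}"
  obtains t :: real
  where "t \<noteq> 0" and "independent {A - t *\<^sub>R P, B + t *\<^sub>R Q}" and "A - t *\<^sub>R P \<noteq> B + t *\<^sub>R Q"
proof -
  obtain a1 a2 where P: "P = a1 *\<^sub>R A + a2 *\<^sub>R B" using P unfolding span_pair_iff by blast
  obtain b1 b2 where Q: "Q = b1 *\<^sub>R A + b2 *\<^sub>R B" using Q unfolding span_pair_iff by blast
  have coeffs: "s *\<^sub>R A + r *\<^sub>R B = 0 \<Longrightarrow> s = 0 \<and> r = 0" for s r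
    using indep independent_pair_iff by blast
  obtain t where t: "t \<in> {1, 2, 3}" and D: "1 + t * (b2 - a1) + t * t * (a2 * b1 - a1 * b2) \<noteq> 0"
    using exists_123_not_root by blast
  (* d is the determinant of the perturbed pair with respect to A, B. *)
  define d where "d = (1 - t * a1) * (1 + t * b2) + t * t * (a2 * b1)"
  have "d \<noteq> 0" using D by (simp add: d_def algebra_simps)
  have "s = 0 \<and> r = 0" if sr: "s *\<^sub>R (A - t *\<^sub>R P) + r *\<^sub>R (B + t *\<^sub>R Q) = 0" for s r
  proof -
    define c1 where "c1 = s * (1 - t * a1) + r * t * b1"
    define c2 where "c2 = - s * t * a2 + r * (1 + t * b2)"
    have "c1 *\<^sub>R A + c2 *\<^sub>R B = 0" using sr by (simp add: P Q c1_def c2_def algebra_simps)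
    then have "c1 = 0" and "c2 = 0" using coeffs by auto
    moreover have "s * d = (1 + t * b2) * c1 - t * b1 * c2" and "r * d = t * a2 * c1 + (1 - t * a1) * c2"
      by (simp_all add: c1_def c2_def d_def algebra_simps)
    ultimately show ?thesis using \<open>d \<noteq> 0\<close> by simp
  qed
  then have "independent {A - t *\<^sub>R P, B + t *\<^sub>R Q} \<and> A - t *\<^sub>R P \<noteq> B + t *\<^sub>R Q"
    by (simp add: independent_pair_iff)
  moreover have "t \<noteq> 0" using t by auto
  ultimately show thesis using that by blast
qed

context nil2_lie
begin

lemma exists_independent_brackets:
  assumes "2 \<le> dim derived"
  obtains x y z w where "independent {br x y, br z w}" and "br x y \<noteq> br z w"
proof -
  obtain x y where a: "br x y \<noteq> 0"
  proof (rule ccontr)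
    assume "\<not> thesis"
    then have "br x y \<in> span {}" for x y using that by (auto intro: span_zero)
    then have "derived \<subseteq> span {}" by (rule derived_subset_span)
    then have "dim derived \<le> card ({} :: 'v set)" by (rule dim_le_card) simp
    then show False using assms by (simp del: dim_eq_0)
  qed
  obtain z w where b: "br z w \<notin> span {br x y}"
  proof (rule ccontr)
    assume "\<not> thesis"
    then have "br z w \<in> span {br x y}" for z w using that by blast
    then have "derived \<subseteq> span {br x y}" by (rule derived_subset_span)
    then have "dim derived \<le> card {br x y}" by (rule dim_le_card) simp
    then show False using assms by simp
  qed
  have "independent {br z w, br x y}" using a b by (simp add: independent_insert)
  moreover have "br x y \<noteq> br z w" using b span_base[of "br x y" "{br x y}"] by auto
  ultimately show thesis using that by (simp add: insert_commute)
qed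

(* If every ad p had rank at most one, testing ad (x + z) on y, w and ad (y + w) on x, z would
   force mu = la = -1, and then ad (y - w) has rank two. *)
lemma exists_ad_rank_2:
  assumes ab: "independent {br x y, br z w}" "br x y \<noteq> br z w"
  obtains p c d where "independent {br p c, br p d}" and "br p c \<noteq> br p d"
proof (rule ccontr)
  assume "\<not> thesis"
  then have dependent: "\<not> (independent {br p c, br p d} \<and> br p c \<noteq> br p d)" for p c d
    using that by blast
  then have dep: "\<exists>s t. (s \<noteq> 0 \<or> t \<noteq> 0) \<and> s *\<^sub>R br p c + t *\<^sub>R br p d = 0" for p c d
    unfolding independent_pair_iff by blast
  define a b where "a = br x y" and "b = br z w"
  have coeffs: "s *\<^sub>R a + t *\<^sub>R b = 0 \<Longrightarrow> s = 0 \<and> t = 0" for s t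
    using ab independent_pair_iff by (auto simp: a_def b_def)
  have "a \<noteq> 0" and "b \<noteq> 0" using coeffs[of 1 0] coeffs[of 0 1] by auto
  obtain mu where mu: "br x w = mu *\<^sub>R a"
    using scaleR_multiple_if_dependent_pair[OF _ dependent[of x y w]] \<open>a \<noteq> 0\<close>
    unfolding a_def by blast
  obtain la where la: "br z y = la *\<^sub>R b"
    using scaleR_multiple_if_dependent_pair[OF _ dependent[of z w y]] \<open>b \<noteq> 0\<close>
    unfolding b_def by blast
  have swaps: "br y x = - a" "br w x = - (mu *\<^sub>R a)" "br y z = - (la *\<^sub>R b)" "br w z = - b"
    using br_swap[of y x] br_swap[of w x] br_swap[of y z] br_swap[of w z] mu la
    by (simp_all add: a_def b_def)
  have la_mu: "la * mu = 1"
  proof -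
    obtain s t where st: "s \<noteq> 0 \<or> t \<noteq> 0" "s *\<^sub>R br (x + z) y + t *\<^sub>R br (x + z) w = 0"
      using dep by blast
    then have "(s + t * mu) *\<^sub>R a + (s * la + t) *\<^sub>R b = 0"
      by (simp add: br_distribs mu la a_def[symmetric] b_def[symmetric] algebra_simps)
    then have h: "s + t * mu = 0 \<and> s * la + t = 0" by (rule coeffs)
    then have t: "t = - (s * la)" and "s \<noteq> 0" using st(1) by auto
    have "s * (1 - la * mu) = 0" using h by (simp add: t algebra_simps)
    then show ?thesis using \<open>s \<noteq> 0\<close> by simp
  qed
  have "mu = -1 \<and> la = -1"
  proof -
    obtain s t where st: "s \<noteq> 0 \<or> t \<noteq> 0" "s *\<^sub>R br (y + w) x + t *\<^sub>R br (y + w) z = 0"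
      using dep by blast
    then have "(- s * (1 + mu)) *\<^sub>R a + (- t * (1 + la)) *\<^sub>R b = 0"
      by (simp add: br_distribs swaps algebra_simps)
    then have "- s * (1 + mu) = 0 \<and> - t * (1 + la) = 0" by (rule coeffs)
    then have "mu = -1 \<or> la = -1" using st(1) by auto
    then show ?thesis using la_mu by (elim disjE) simp_all
  qed
  obtain s t where st: "s \<noteq> 0 \<or> t \<noteq> 0" "s *\<^sub>R br (y - w) x + t *\<^sub>R br (y - w) z = 0"
    using dep by blast
  have "br (y - w) x = (- 2) *\<^sub>R a" and "br (y - w) z = 2 *\<^sub>R b"
    using \<open>mu = -1 \<and> la = -1\<close> by (simp_all add: br_distribs swaps scaleR_2)
  then have "(s * - 2) *\<^sub>R a + (t * 2) *\<^sub>R b = 0" using st(2) by simp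
  then have "s * - 2 = 0 \<and> t * 2 = 0" by (rule coeffs)
  then show False using st(1) by simp
qed

lemma independent_ad_rank_2:
  assumes AB: "independent {br q1 q3, br q1 q4}" "br q1 q3 \<noteq> br q1 q4"
  shows "independent {q1, q3, q4, br q1 q3, br q1 q4}" and "card {q1, q3, q4, br q1 q3, br q1 q4} = 5"
proof -
  define A B where "A = br q1 q3" and "B = br q1 q4"
  have coeffs: "s *\<^sub>R A + t *\<^sub>R B = 0 \<Longrightarrow> s = 0 \<and> t = 0" for s t
    using AB independent_pair_iff by (auto simp: A_def B_def)
  have span_AB: "span {A, B} \<subseteq> derived"
    by (rule span_subset_derived) (simp add: A_def B_def br_in_derived)
  have q4: "q4 \<notin> span {A, B}"
  proof
    assume "q4 \<in> span {A, B}"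
    then have "q4 \<in> derived" using span_AB by blast
    then have "br q1 q4 = 0" by (rule derived_central_right)
    then show False using coeffs[of 0 1] by (simp add: B_def)
  qed
  have q3: "q3 \<notin> span {q4, A, B}"
  proof
    assume "q3 \<in> span {q4, A, B}"
    then obtain k g where g: "g \<in> span {A, B}" and q3: "q3 = k *\<^sub>R q4 + g"
      using span_insert_iff[of q3 q4 "{A, B}"] by blast
    have "br q1 g = 0" using g span_AB by (blast intro: derived_central_right)
    then have "1 *\<^sub>R A + (- k) *\<^sub>R B = 0" by (simp add: A_def B_def q3 br_distribs)
    then show False using coeffs[of 1 "- k"] by simp
  qed
  have q1: "q1 \<notin> span {q3, q4, A, B}"
  proof
    assume "q1 \<in> span {q3, q4, A, B}"
    then obtain k3 y where y: "y \<in> span {q4, A, B}" and q1: "q1 = k3 *\<^sub>R q3 + y"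
      using span_insert_iff[of q1 q3 "{q4, A, B}"] by blast
    then obtain k4 g where g: "g \<in> span {A, B}" and y_eq: "y = k4 *\<^sub>R q4 + g"
      using span_insert_iff[of y q4 "{A, B}"] by blast
    have "br g q3 = 0" and "br g q4 = 0" using g span_AB derived_central_left by blast+
    then have A: "A = (- k4) *\<^sub>R br q3 q4" and "B = k3 *\<^sub>R br q3 q4"
      using br_swap[of q4 q3] by (simp_all add: A_def B_def q1 y_eq br_distribs br_self)
    then have "k3 *\<^sub>R A + k4 *\<^sub>R B = 0" by (simp add: algebra_simps)
    then have "k4 = 0" using coeffs by blast
    then have "A = 0" using A by simp
    then show False using coeffs[of 1 0] by simp
  qed
  have "independent {A, B}" using AB(1) by (simp add: A_def B_def)
  then show "independent {q1, q3, q4, br q1 q3, br q1 q4}"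
    unfolding A_def[symmetric] B_def[symmetric]
    by (intro independent_insertI[OF q1] independent_insertI[OF q3] independent_insertI[OF q4])
  have "card {A, B} = 2" using AB(2) by (simp add: A_def B_def)
  then show "card {q1, q3, q4, br q1 q3, br q1 q4} = 5"
    unfolding A_def[symmetric] B_def[symmetric]
    by (simp only: card_insert_not_in_span[OF _ q1] card_insert_not_in_span[OF _ q3]
        card_insert_not_in_span[OF _ q4] finite.emptyI finite.insertI)
qed

lemma exists_basis_ad_rank_2:
  assumes dim: "DIM('v) = 6"
    and AB: "independent {br q1 q3, br q1 q4}" "br q1 q3 \<noteq> br q1 q4"
  obtains q2 where "span {q1, q2, q3, q4, br q1 q3, br q1 q4} = UNIV"
proof -
  let ?S = "{q1, q3, q4, br q1 q3, br q1 q4}"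
  note indep5 = independent_ad_rank_2(1)[OF AB] and card5 = independent_ad_rank_2(2)[OF AB]
  obtain q2 where q2: "q2 \<notin> span ?S"
  proof (rule ccontr)
    assume "\<not> thesis"
    then have "UNIV \<subseteq> span ?S" using that by blast
    then have "dim (UNIV :: 'v set) \<le> card ?S" by (rule dim_le_card) simp
    then show False using card5 dim by simp
  qed
  have indep6: "independent (insert q2 ?S)" using q2 indep5 by (rule independent_insertI)
  have "card (insert q2 ?S) = 6"
    using card5 by (simp only: card_insert_not_in_span[OF _ q2] finite.emptyI finite.insertI)
  then have "UNIV \<subseteq> span (insert q2 ?S)"
    using card_ge_dim_independent[OF subset_UNIV indep6] dim by simp
  then have "span {q1, q2, q3, q4, br q1 q3, br q1 q4} = UNIV" by (auto simp: insert_commute)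
  then show thesis by (rule that)
qed

(* With J q1 = t q2 and J q3 = q4 the Nijenhuis tensor at (q1, q3) is al + J be, where
   al = [q1, q3] - t [q2, q4] and be = [q1, q4] + t [q2, q3]; so J be = - al is forced, and t is
   chosen to keep al and be independent. *)
lemma exists_adapted_basis_dim_derived_2:
  assumes dim: "DIM('v) = 6" and dim2: "dim derived = 2"
  obtains q1 q2 q3 q4 t where "span {q1, t *\<^sub>R q2, q3, q4, br q1 q4 + t *\<^sub>R br q2 q3,
    - (br q1 q3 - t *\<^sub>R br q2 q4)} = UNIV"
proof -
  have "2 \<le> dim derived" using dim2 by simp
  then obtain x y z w where "independent {br x y, br z w}" and "br x y \<noteq> br z w"
    by (rule exists_independent_brackets)
  then obtain q1 q3 q4 where AB: "independent {br q1 q3, br q1 q4}" "br q1 q3 \<noteq> br q1 q4"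
    by (rule exists_ad_rank_2)
  obtain q2 where span6: "span {q1, q2, q3, q4, br q1 q3, br q1 q4} = UNIV"
    using exists_basis_ad_rank_2[OF dim AB] by blast
  have derived_eq: "derived \<subseteq> span {u, v}"
    if "{u, v} \<subseteq> derived" and "independent {u, v}" and "u \<noteq> v" for u v
    using that dim2 by (intro card_ge_dim_independent) auto
  have "derived \<subseteq> span {br q1 q3, br q1 q4}"
    by (rule derived_eq) (simp_all add: br_in_derived AB)
  then have P: "br q2 q4 \<in> span {br q1 q3, br q1 q4}" and Q: "br q2 q3 \<in> span {br q1 q3, br q1 q4}"
    using br_in_derived by blast+
  obtain t where "t \<noteq> 0"
    and indep: "independent {br q1 q3 - t *\<^sub>R br q2 q4, br q1 q4 + t *\<^sub>R br q2 q3}"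
    and ne: "br q1 q3 - t *\<^sub>R br q2 q4 \<noteq> br q1 q4 + t *\<^sub>R br q2 q3"
    by (rule exists_perturbation_independent_pair[OF AB P Q])
  define al be where "al = br q1 q3 - t *\<^sub>R br q2 q4" and "be = br q1 q4 + t *\<^sub>R br q2 q3"
  have "al \<in> derived" "be \<in> derived"
    unfolding al_def be_def using br_in_derived subspace_derived
    by (auto intro: subspace_add subspace_diff subspace_scale)
  then have "derived \<subseteq> span {al, be}"
    by (intro derived_eq) (use indep ne in \<open>simp_all add: al_def be_def\<close>)
  define V where "V = {q1, t *\<^sub>R q2, q3, q4, be, - al}"
  have "{al, be} \<subseteq> span V"
    using span_superset[of V] span_neg[of "- al" V] by (auto simp: V_def)
  then have "derived \<subseteq> span V"
    using \<open>derived \<subseteq> span {al, be}\<close> span_minimal[OF _ subspace_span] by blast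
  moreover have "q2 \<in> span V"
  proof -
    have "(1 / t) *\<^sub>R (t *\<^sub>R q2) \<in> span V" by (intro span_scale span_base) (simp add: V_def)
    then show ?thesis using \<open>t \<noteq> 0\<close> by simp
  qed
  ultimately have "{q1, q2, q3, q4, br q1 q3, br q1 q4} \<subseteq> span V"
    using br_in_derived span_superset[of V] by (auto simp: V_def)
  then have "span {q1, q2, q3, q4, br q1 q3, br q1 q4} \<subseteq> span V"
    by (rule span_minimal[OF _ subspace_span])
  then have "span V = UNIV" using span6 by auto
  then show thesis unfolding V_def al_def be_def by (rule that)
qed

lemma complex_structure_exists_dim_derived_2:
  assumes dim: "DIM('v) = 6" and dim2: "dim derived = 2"
  shows "\<exists>J. complex_structure br J"
proof -
  obtain q1 q2 q3 q4 t where span: "span {q1, t *\<^sub>R q2, q3, q4, br q1 q4 + t *\<^sub>R br q2 q3,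
      - (br q1 q3 - t *\<^sub>R br q2 q4)} = UNIV"
    by (rule exists_adapted_basis_dim_derived_2[OF dim dim2])
  define al be where "al = br q1 q3 - t *\<^sub>R br q2 q4" and "be = br q1 q4 + t *\<^sub>R br q2 q3"
  have al_be: "al \<in> derived" "be \<in> derived"
    unfolding al_def be_def using br_in_derived subspace_derived
    by (auto intro: subspace_add subspace_diff subspace_scale)
  show ?thesis
  proof (rule complex_structure_from_pairing[OF dim span[folded al_def be_def]])
    fix J :: "'v \<Rightarrow> 'v"
    assume lin: "linear J" and J: "J q1 = t *\<^sub>R q2" "J (t *\<^sub>R q2) = - q1" "J q3 = q4"
      "J q4 = - q3" "J be = - al" "J (- al) = - be"
    have "nijenhuis J q1 q3 = br q1 q3 + J (t *\<^sub>R br q2 q3 + br q1 q4) - t *\<^sub>R br q2 q4"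
      unfolding nijenhuis_def J(1,3) by (simp only: br_distribs)
    also have "\<dots> = al + J be" by (simp add: al_def be_def algebra_simps)
    also have "\<dots> = 0" by (simp add: J(5))
    finally have "nijenhuis J q1 q3 = 0" .
    moreover have "nijenhuis J q1 be = 0" and "nijenhuis J q3 be = 0"
      using al_be derived_central_right linear_0[OF lin]
      by (simp_all add: nijenhuis_def J br_distribs)
    ultimately show "nijenhuis J q1 q3 = 0 \<and> nijenhuis J q1 be = 0 \<and> nijenhuis J q3 be = 0"
      by blast
  qed
qed

lemma complex_structure_exists:
  assumes dim: "DIM('v) = 6" and nz: "br x y \<noteq> 0"
  shows "\<exists>J. complex_structure br J"
proof -
  consider "3 \<le> dim derived" | "dim derived = 2" | "dim derived \<le> 1" by linarith
  then show ?thesis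
  proof cases
    case 1
    then obtain f where lin: "linear f" and bij: "bij f"
      and hom: "\<And>x y. f (br x y) = f3_bracket (f x) (f y)"
      using lie_isomorphic_f3[OF dim] unfolding lie_isomorphic_def by blast
    show ?thesis using complex_structure_transfer[OF lin bij hom complex_structure_f3_J] by blast
  next
    case 2
    then show ?thesis by (rule complex_structure_exists_dim_derived_2[OF dim])
  next
    case 3
    then show ?thesis by (rule complex_structure_exists_dim_derived_le_1[OF dim nz])
  qed
qed

end

lemma nil2_lie_if_two_step_nilpotent:
  "lie_algebra br \<Longrightarrow> two_step_nilpotent br \<Longrightarrow> nil2_lie br"
  unfolding lie_algebra_def two_step_nilpotent_def by unfold_locales auto

theorem mainTheorem10:
  fixes dummy :: "'v::euclidean_space itself"
  assumes "DIM('v) = 6"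
  shows "(\<forall>br :: 'v \<Rightarrow> 'v \<Rightarrow> 'v. lie_algebra br \<and> two_step_nilpotent br \<longrightarrow>
            (\<exists>J. complex_structure br J))
       \<and> (\<forall>br :: 'v \<Rightarrow> 'v \<Rightarrow> 'v. lie_algebra br \<and> two_step_nilpotent br \<longrightarrow>
            ((\<exists>J. complex_structure br J \<and> step_cs br J 3) \<longleftrightarrow> lie_isomorphic br f3_bracket))
       \<and> (\<forall>J. complex_structure f3_bracket J \<longrightarrow> step_cs f3_bracket J 3)"
proof (intro conjI allI impI)
  fix br :: "'v \<Rightarrow> 'v \<Rightarrow> 'v"
  assume br: "lie_algebra br \<and> two_step_nilpotent br"
  then interpret nil2_lie br using nil2_lie_if_two_step_nilpotent by blast
  obtain x y where "br x y \<noteq> 0" using br unfolding two_step_nilpotent_def by blast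
  show "\<exists>J. complex_structure br J" by (rule complex_structure_exists[OF assms \<open>br x y \<noteq> 0\<close>])
next
  fix br :: "'v \<Rightarrow> 'v \<Rightarrow> 'v"
  assume br: "lie_algebra br \<and> two_step_nilpotent br"
  then interpret nil2_lie br using nil2_lie_if_two_step_nilpotent by blast
  obtain x y where "br x y \<noteq> 0" using br unfolding two_step_nilpotent_def by blast
  show "(\<exists>J. complex_structure br J \<and> step_cs br J 3) \<longleftrightarrow> lie_isomorphic br f3_bracket"
    by (rule step_3_complex_structure_iff_f3[OF assms \<open>br x y \<noteq> 0\<close>])
next
  fix J
  assume "complex_structure f3_bracket J"
  then show "step_cs f3_bracket J 3" by (rule f3_step_3)
qed

end
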